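(* Let $p \equiv 1 \pmod 4$ be a prime, let $\ell \neq p$ be a prime, and let $\alpha, \beta \colon \mathbf{F}_p^{\boxtimes} \to \mathbf{Z}/\ell$ be voltage assignments. Suppose the adjacency spectra of the covers $X^\alpha$ and $X^\beta$ coincide, i.e. $\{\theta^\alpha_{a,k}\}_{a \in \mathbf{F}_p,\, k \in \mathbf{Z}/\ell} = \{\theta^\beta_{a,k}\}_{a \in \mathbf{F}_p,\, k \in \mathbf{Z}/\ell}$ as multisets. Then there exists $n \in (\mathbf{Z}/\ell)^\times$ such that $X^\alpha$ and $X^{n\beta}$ are isomorphic as $\mathbf{Z}/\ell$-covering graphs. In particular, $X^\alpha$ and $X^\beta$ are isomorphic as graphs.
   Context: For a finite field $\mathbf{F}_q$ of characteristic $p$ with $q = p^r \equiv 1 \pmod 4$, let $\mathbf{F}_q^{\boxtimes} = \{x^2 : x \in \mathbf{F}_q^\times\}$ be the set of nonzero squares (it contains $-1$). The Paley graph $X(\mathbf{F}_q)$ has vertex set $\mathbf{F}_q$ with $x$ adjacent to $y$ iff $y - x \in \mathbf{F}_q^{\boxtimes}$. Fix a prime $\ell \neq p$. A voltage assignment is a function $\alpha \colon \mathbf{F}_q^{\boxtimes} \to \mathbf{Z}/\ell$ that is not identically zero and satisfies $\alpha(-s) = -\alpha(s)$ for all $s \in \mathbf{F}_q^{\boxtimes}$. The translation invariant $\mathbf{Z}/\ell$-cover $X^\alpha$ is the graph with vertex set $\mathbf{F}_q \times \mathbf{Z}/\ell$ and an edge between $(x,i)$ and $(y,j)$ iff $y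 - x \in \mathbf{F}_q^{\boxtimes}$ and $j - i = \alpha(y-x)$; equivalently it is the Cayley graph of $\mathbf{F}_q^+ \times \mathbf{Z}/\ell$ with respect to $S^\alpha = \{(s, \alpha(s)) : s \in \mathbf{F}_q^{\boxtimes}\}$. It comes with the projection $(x,i) \mapsto x$ to $X(\mathbf{F}_q)$ and the action of $\mathbf{Z}/\ell$ by $j \cdot (x,i) = (x, i+j)$. For $n \in (\mathbf{Z}/\ell)^\times$, $n\alpha$ denotes the voltage assignment $s \mapsto n\alpha(s)$. An isomorphism of $\mathbf{Z}/\ell$-covering graphs $X^\alpha \to X^\beta$ is a graph isomorphism $f$ with $f(x, i+j) = f(x,i) + (0,j)$ for all $x, i, j$ (so it induces a map on the base $X(\mathbf{F}_q)$ compatible with the projections). Let $\zeta_p = e^{2\pi i/p}$, $\zeta_\ell = e^{2\pi i/\ell}$, and $\mathrm{tr} \colon \mathbf{F}_q \to \mathbf{F}_p$, $\mathrm{tr}(x) = x + x^p + \dots + x^{p^{r-1}}$. For $a \in \mathbf{F}_q$ and $k \in \mathbf{Z}/\ell$ set $\theta^\alpha_{a,k} = \sum_{s \in \mathbf{F}_q^{\boxtimes}} \zeta_p^{\mathrm{tr}(as)} \zeta_\ell^{k\alpha(s)}$; the multiset $\{\theta^\alpha_{a,k}\}_{a \in \mathbf{F}_q, k \in \mathbf{Z}/\ell}$ is the multiset of eigenvalues of the adjacency matrix of $X^\alpha$. *)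

theory Defs
  imports "HOL-Analysis.Analysis" "HOL-Library.Multiset"
begin

text \<open>F_p is modelled as the residues {0..<p} (integers, arithmetic mod p),
  Z/l as the residues {0..<l}. Since q = p is prime, the trace F_p \<rightarrow> F_p is the identity.\<close>

definition sq_set :: "int \<Rightarrow> int set" where
  "sq_set p = {(x * x) mod p | x. x \<in> {1..<p}}"

text \<open>A voltage assignment: a function on the nonzero squares with values in Z/l
  (only its residues mod l matter), odd, and not identically zero.\<close>
definition is_voltage :: "int \<Rightarrow> int \<Rightarrow> (int \<Rightarrow> int) \<Rightarrow> bool" where
  "is_voltage p l \<alpha> \<longleftrightarrow>
     (\<exists>s\<in>sq_set p. \<alpha> s mod l \<noteq> 0) \<and>
     (\<forall>s\<in>sq_set p. \<alpha> ((- s) mod p) mod l = (- \<alpha> s) mod l)"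

definition cover_verts :: "int \<Rightarrow> int \<Rightarrow> (int \<times> int) set" where
  "cover_verts p l = {0..<p} \<times> {0..<l}"

definition cover_adj :: "int \<Rightarrow> int \<Rightarrow> (int \<Rightarrow> int) \<Rightarrow> int \<times> int \<Rightarrow> int \<times> int \<Rightarrow> bool" where
  "cover_adj p l \<alpha> v w \<longleftrightarrow>
     (snd w - snd v) mod l = (\<alpha> ((fst w - fst v) mod p)) mod l \<and> (fst w - fst v) mod p \<in> sq_set p"

definition scale_voltage :: "int \<Rightarrow> int \<Rightarrow> (int \<Rightarrow> int) \<Rightarrow> int \<Rightarrow> int" where
  "scale_voltage l n \<alpha> = (\<lambda>s. (n * \<alpha> s) mod l)"

definition theta :: "int \<Rightarrow> int \<Rightarrow> (int \<Rightarrow> int) \<Rightarrow> int \<Rightarrow> int \<Rightarrow> complex" where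
  "theta p l \<alpha> a k = (\<Sum>s\<in>sq_set p. cis (2 * pi * of_int ((a * s) mod p) / of_int p)
                                      * cis (2 * pi * of_int ((k * \<alpha> s) mod l) / of_int l))"

definition spectrum_mset :: "int \<Rightarrow> int \<Rightarrow> (int \<Rightarrow> int) \<Rightarrow> complex multiset" where
  "spectrum_mset p l \<alpha> = image_mset (\<lambda>(a, k). theta p l \<alpha> a k) (mset_set ({0..<p} \<times> {0..<l}))"

definition graph_iso :: "int \<Rightarrow> int \<Rightarrow> (int \<Rightarrow> int) \<Rightarrow> (int \<Rightarrow> int) \<Rightarrow> (int \<times> int \<Rightarrow> int \<times> int) \<Rightarrow> bool" where
  "graph_iso p l \<alpha> \<beta> f \<longleftrightarrow>
     bij_betw f (cover_verts p l) (cover_verts p l) \<and>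
     (\<forall>v\<in>cover_verts p l. \<forall>w\<in>cover_verts p l. cover_adj p l \<alpha> v w \<longleftrightarrow> cover_adj p l \<beta> (f v) (f w))"

definition cover_iso :: "int \<Rightarrow> int \<Rightarrow> (int \<Rightarrow> int) \<Rightarrow> (int \<Rightarrow> int) \<Rightarrow> (int \<times> int \<Rightarrow> int \<times> int) \<Rightarrow> bool" where
  "cover_iso p l \<alpha> \<beta> f \<longleftrightarrow> graph_iso p l \<alpha> \<beta> f \<and>
     (\<forall>x\<in>{0..<p}. \<forall>i\<in>{0..<l}. \<forall>j\<in>{0..<l}.
        f (x, (i + j) mod l) = (fst (f (x, i)), (snd (f (x, i)) + j) mod l))"

end

(* The eigenvalue theta^alpha_{1,1} of X^alpha is some theta^beta_{a,k} of X^beta. Both are sums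
   of pl-th roots of unity, so applying the automorphisms of Q(zeta_pl) (irreducibility of the
   cyclotomic polynomial, proved with the Frobenius congruence g(x^q) = g(x)^q mod q) gives
   theta^alpha_{u,v} = theta^beta_{ua,vk} for all units u mod p and v mod l. Fourier inversion on
   F_p x Z/l then compares the labels (s, alpha(s)) with (as, k beta(s)): a is a unit and for every
   square j there is a square s with as = j and k beta(s) = alpha(j). So x |-> a^-1 x is an
   isomorphism of covers X^alpha = X^(k beta), and k is a unit because alpha is not identically 0. *)

theory Submission
  imports Defs "HOL-Computational_Algebra.Polynomial_Factorial" "HOL-Number_Theory.Cong"
begin

section \<open>Integer polynomials vanishing at roots of unity\<close>

abbreviation ipoly :: "int poly \<Rightarrow> 'a::comm_ring_1 \<Rightarrow> 'a" where
  "ipoly P x \<equiv> poly (map_poly of_int P) x"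

lemma map_poly_of_int_add [simp]: "map_poly of_int (P + Q) = map_poly of_int P + map_poly of_int Q"
  by (rule poly_eqI) (simp add: coeff_map_poly)

lemma map_poly_of_int_diff [simp]: "map_poly of_int (P - Q) = map_poly of_int P - map_poly of_int Q"
  by (rule poly_eqI) (simp add: coeff_map_poly)

lemma map_poly_of_int_mult [simp]: "map_poly of_int (P * Q) = map_poly of_int P * map_poly of_int Q"
  by (rule poly_eqI) (simp add: coeff_map_poly coeff_mult)

lemma map_poly_of_int_smult [simp]: "map_poly of_int (smult c P) = smult (of_int c) (map_poly of_int P)"
  by (rule poly_eqI) (simp add: coeff_map_poly)

lemma ipoly_monom [simp]: "ipoly (monom c k) x = of_int c * x ^ k"
  by (simp add: map_poly_monom poly_monom)

lemma ipoly_sum: "ipoly (sum f A) x = (\<Sum>a\<in>A. ipoly (f a) x)"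
  by (induction A rule: infinite_finite_induct) simp_all

lemma ipoly_pcompose_monom: "ipoly (pcompose P (monom 1 q)) x = ipoly P (x ^ q)"
  by (induction P rule: pCons_induct) (simp_all add: pcompose_pCons map_poly_pCons)

lemma int_minimal_poly_exists:
  fixes w :: "'a::{idom, ring_char_0}"
  assumes "lead_coeff M = 1" and "ipoly M w = 0"
  obtains f where "lead_coeff f = 1" and "ipoly f w = 0" and "\<And>P. ipoly P w = 0 \<Longrightarrow> f dvd P"
proof -
  define d where "d = (LEAST d. \<exists>P. P \<noteq> 0 \<and> ipoly P w = 0 \<and> degree P = d)"
  have "\<exists>P. P \<noteq> 0 \<and> ipoly P w = 0 \<and> degree P = d"
    unfolding d_def by (rule LeastI[of _ "degree M"]) (use assms in \<open>intro exI[of _ M], auto\<close>)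
  then obtain r where r: "r \<noteq> 0" "ipoly r w = 0" "degree r = d" by blast
  have minimal: "d \<le> degree P" if "P \<noteq> 0" "ipoly P w = 0" for P
    unfolding d_def by (rule Least_le) (use that in auto)
  \<comment> \<open>the pseudo-remainder of P by r also vanishes at w and has smaller degree, so it is 0\<close>
  have r_dvd: "\<exists>c. c \<noteq> 0 \<and> r dvd smult c P" if P_root: "ipoly P w = 0" for P
  proof -
    obtain Q R where QR: "pseudo_divmod P r = (Q, R)" by fastforce
    note pd = pseudo_divmod[OF r(1) QR]
    define c where "c = lead_coeff r ^ (Suc (degree P) - degree r)"
    have "of_int c * ipoly P w = ipoly r w * ipoly Q w + ipoly R w"
      using arg_cong[OF pd(1), of "\<lambda>P. ipoly P w"] by (simp add: c_def)
    then have "R = 0" using pd(2) minimal r P_root by fastforce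
    then show ?thesis using pd(1) r(1) by (intro exI[of _ c]) (auto simp: c_def)
  qed
  define f0 where "f0 = primitive_part r"
  have "of_int (content r) * ipoly f0 w = ipoly r w"
    unfolding f0_def by (metis content_times_primitive_part map_poly_of_int_smult poly_smult)
  then have f0_root: "ipoly f0 w = 0" using r(1,2) by simp
  have f0_dvd: "f0 dvd P" if P_root: "ipoly P w = 0" for P
  proof -
    obtain c where c: "c \<noteq> 0" "r dvd smult c P" using r_dvd[OF P_root] by blast
    have "f0 dvd smult c P"
      using c(2) by (metis content_times_primitive_part dvd_smult_cancel dvd_trans dvd_triv_right f0_def smult_dvd_cancel)
    then have "fract_poly f0 dvd smult (to_fract c) (fract_poly P)" by (metis fract_poly_dvd fract_poly_smult)
    then have "fract_poly f0 dvd fract_poly P" using c(1) dvd_smult_cancel by (metis to_fract_eq_0_iff)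
    then show ?thesis by (rule fract_poly_dvdD) (use r(1) in \<open>simp add: f0_def\<close>)
  qed
  obtain h where "M = f0 * h" using f0_dvd[OF assms(2)] by blast
  then have "lead_coeff f0 * lead_coeff h = 1" using assms(1) by (simp add: lead_coeff_mult)
  then have unit: "lead_coeff f0 = 1 \<or> lead_coeff f0 = -1" using zmult_eq_1_iff by blast
  show ?thesis
  proof
    show "lead_coeff (smult (lead_coeff f0) f0) = 1" using unit by (auto simp: lead_coeff_smult)
    show "ipoly (smult (lead_coeff f0) f0) w = 0" using f0_root by simp
    show "smult (lead_coeff f0) f0 dvd P" if "ipoly P w = 0" for P
      using f0_dvd[OF that] unit by auto
  qed
qed

lemma prime_dvd_power_add_minus_powers:
  fixes x y :: "'a::comm_ring_1"
  assumes "prime q"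
  shows "of_nat q dvd (x + y) ^ q - x ^ q - y ^ q"
proof -
  have q: "q \<ge> 1" using prime_ge_1_nat[OF assms] .
  have "(x + y) ^ q = (\<Sum>k\<le>q. of_nat (q choose k) * x ^ k * y ^ (q - k))"
    by (rule binomial_ring)
  also have "{..q} = insert 0 (insert q {1..<q})" using q by auto
  finally have "(x + y) ^ q - x ^ q - y ^ q = (\<Sum>k\<in>{1..<q}. of_nat (q choose k) * x ^ k * y ^ (q - k))"
    using q by (simp add: algebra_simps)
  also have "of_nat q dvd \<dots>"
  proof (rule dvd_sum)
    fix k assume "k \<in> {1..<q}"
    then have "q dvd q choose k" using assms by (intro dvd_choose_prime) auto
    then obtain c where "q choose k = q * c" by blast
    then show "of_nat q dvd of_nat (q choose k) * x ^ k * y ^ (q - k)" by (simp add: mult.assoc)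
  qed
  finally show ?thesis .
qed

lemma prime_dvd_power_minus_self:
  fixes a :: int
  assumes "prime q"
  shows "int q dvd a ^ q - a"
proof (induction a rule: int_induct[of _ 0])
  case base
  then show ?case using prime_gt_0_nat[OF assms] by (simp add: power_0_left)
next
  case (step1 i)
  have "int q dvd (i + 1) ^ q - i ^ q - 1 ^ q"
    using prime_dvd_power_add_minus_powers[OF assms, of i 1] by simp
  from dvd_add[OF this step1(2)] show ?case by (simp add: algebra_simps)
next
  case (step2 i)
  have "int q dvd (i - 1 + 1) ^ q - (i - 1) ^ q - 1 ^ q"
    using prime_dvd_power_add_minus_powers[OF assms, of "i - 1" 1] by simp
  from dvd_diff[OF step2(2) this] show ?case by (simp add: algebra_simps)
qed

lemma prime_dvd_pcompose_monom_minus_power: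
  fixes g :: "int poly"
  assumes "prime q"
  shows "[:int q:] dvd pcompose g (monom 1 q) - g ^ q"
proof (induction g rule: pCons_induct)
  case 0
  then show ?case using prime_gt_0_nat[OF assms] by (simp add: power_0_left)
next
  case (pCons a g)
  define x :: "int poly" where "x = [:0, 1:]"
  have x_power: "monom 1 q = x ^ q" by (simp add: x_def monom_altdef)
  have "pCons a g ^ q = ([:a:] + x * g) ^ q" by (simp add: x_def)
  then have "pcompose (pCons a g) (monom 1 q) - pCons a g ^ q
      = [:a - a ^ q:] + x ^ q * (pcompose g (monom 1 q) - g ^ q)
        - (([:a:] + x * g) ^ q - [:a:] ^ q - (x * g) ^ q)"
    by (simp add: pcompose_pCons x_power power_mult_distrib poly_const_pow algebra_simps)
  moreover have "[:int q:] dvd [:a - a ^ q:]"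
    using prime_dvd_power_minus_self[OF assms, of a] by (simp add: dvd_diff_commute)
  moreover have "[:int q:] dvd ([:a:] + x * g) ^ q - [:a:] ^ q - (x * g) ^ q"
    using prime_dvd_power_add_minus_powers[OF assms] by (metis of_nat_poly)
  ultimately show ?case using pCons.IH by simp
qed

lemma dvd_const_if_dvd_const_minus_monic_multiple:
  fixes q c :: int and f B :: "int poly"
  assumes "lead_coeff f = 1" and "degree f \<ge> 1" and "q > 0"
    and "[:q:] dvd [:c:] - f * B"
  shows "q dvd c"
proof -
  \<comment> \<open>reduce the coefficients of B into [0, q); the leading one then survives in f * B\<close>
  define R where "R = map_poly (\<lambda>x. x mod q) B"
  define D where "D = map_poly (\<lambda>x. x div q) B"
  have "B = [:q:] * D + R"
    unfolding R_def D_def by (rule poly_eqI) (simp add: coeff_map_poly)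
  then have "[:c:] - f * R = ([:c:] - f * B) + [:q:] * (f * D)"
    by (simp add: algebra_simps)
  then have dvd_R: "[:q:] dvd [:c:] - f * R"
    using assms(4) by (metis dvd_add dvd_triv_left)
  show ?thesis
  proof (cases "R = 0")
    case True
    then show ?thesis using dvd_R by (metis const_poly_dvd_iff coeff_pCons_0 diff_zero mult_zero_right)
  next
    case False
    define d where "d = degree f + degree R"
    have "degree (f * R) = d" unfolding d_def using assms(1) False by (intro degree_mult_eq) auto
    moreover have "coeff (f * R) d = lead_coeff R" using assms(1) by (simp add: d_def coeff_mult_degree_sum)
    ultimately have "coeff ([:c:] - f * R) d = - lead_coeff R"
      using assms(2) by (simp add: d_def coeff_pCons split: nat.splits)
    then have "q dvd lead_coeff R" using dvd_R by (metis const_poly_dvd_iff dvd_minus_iff)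
    moreover have "lead_coeff R = coeff B (degree R) mod q" by (simp add: R_def coeff_map_poly)
    ultimately have "lead_coeff R = 0" using assms(3) by (metis dvd_imp_mod_0 mod_mod_trivial)
    then show ?thesis using False by simp
  qed
qed

lemma dvd_power_add_mult_minus_power: "(a::'a::comm_ring_1) dvd (u + a * v) ^ k - u ^ k"
proof (induction k)
  case (Suc k)
  have "(u + a * v) ^ Suc k - u ^ Suc k = (u + a * v) * ((u + a * v) ^ k - u ^ k) + a * (v * u ^ k)"
    by (simp add: algebra_simps)
  then show ?case using Suc by simp
qed simp

lemma pderiv_xpow_minus_one_identity:
  assumes "n > 0"
  shows "[:0, 1:] * pderiv (monom 1 n - 1) - smult (of_nat n) (monom 1 n - 1) = [:of_nat n :: 'a::idom:]"
proof -
  have "[:0, 1:] * monom (of_nat n) (n - 1) = (monom (of_nat n) n :: 'a poly)"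
    using assms by (cases n) (simp_all add: monom_Suc)
  then show ?thesis by (simp add: pderiv_diff pderiv_monom smult_monom smult_diff_right)
qed

text \<open>x^n - 1 is separable mod q for q not dividing n: the identity x M' - n M = n turns a common
  factor f of M = f g and of g^q (mod q) into a congruence n^q \<equiv> f B (mod q).\<close>
lemma prime_dvd_if_xpow_minus_one_repeated_factor:
  fixes f g h :: "int poly"
  assumes M: "monom 1 n - 1 = f * g" and "n > 0"
    and f: "lead_coeff f = 1" "degree f \<ge> 1"
    and q: "prime q" and mod_q: "[:int q:] dvd g ^ q - f * h"
  shows "q dvd n"
proof -
  define x :: "int poly" where "x = [:0, 1:]"
  define u where "u = x * g * pderiv f"
  define v where "v = x * pderiv g - smult (int n) g"
  have "[:int n:] = u + f * v"
    using pderiv_xpow_minus_one_identity[OF \<open>n > 0\<close>, where 'a = int]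
    unfolding M pderiv_mult u_def v_def x_def by (simp add: algebra_simps)
  then have "[:int n ^ q:] = (u + f * v) ^ q" by (metis poly_const_pow)
  moreover obtain K where "(u + f * v) ^ q - u ^ q = f * K"
    using dvd_power_add_mult_minus_power by blast
  ultimately have "[:int n ^ q:] - f * (K + (x * pderiv f) ^ q * h) = (x * pderiv f) ^ q * (g ^ q - f * h)"
    unfolding u_def by (simp add: algebra_simps power_mult_distrib)
  then have "[:int q:] dvd [:int n ^ q:] - f * (K + (x * pderiv f) ^ q * h)"
    using mod_q by simp
  then have "int q dvd int n ^ q"
    using dvd_const_if_dvd_const_minus_monic_multiple f prime_gt_0_nat[OF q] by simp
  then show ?thesis using q by (metis of_nat_dvd_iff of_nat_power prime_dvd_power)
qed

lemma ipoly_root_of_unity_pow_prime: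
  fixes w :: "'a::{idom, ring_char_0}"
  assumes n: "n > 0" "w ^ n = 1" and q: "prime q" "\<not> q dvd n" and root: "ipoly P w = 0"
  shows "ipoly P (w ^ q) = 0"
proof -
  define M :: "int poly" where "M = monom 1 n - 1"
  have "lead_coeff M = 1"
    using n(1) lead_coeff_add_le[of "-1 :: int poly" "monom 1 n"] by (simp add: M_def degree_monom_eq)
  moreover have M_root: "ipoly M w = 0" using n(2) by (simp add: M_def)
  ultimately obtain f where f: "lead_coeff f = 1" "ipoly f w = 0" "\<And>P. ipoly P w = 0 \<Longrightarrow> f dvd P"
    using int_minimal_poly_exists by blast
  have "degree f \<ge> 1"
  proof (rule ccontr)
    assume "\<not> degree f \<ge> 1"
    then have "f = 1" using f(1) by (metis degree_0_id less_one not_le one_pCons)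
    then show False using f(2) by simp
  qed
  have "ipoly f (w ^ q) = 0"
  proof (rule ccontr)
    assume f_nonroot: "ipoly f (w ^ q) \<noteq> 0"
    obtain g where g: "M = f * g" using f(3)[OF M_root] by blast
    have "(w ^ q) ^ n = 1" using n(2) by (metis mult.commute power_mult power_one)
    then have "ipoly M (w ^ q) = 0" by (simp add: M_def)
    then have "ipoly (pcompose g (monom 1 q)) w = 0" using f_nonroot g by (simp add: ipoly_pcompose_monom)
    then obtain h where "pcompose g (monom 1 q) = f * h" using f(3) by blast
    then have "[:int q:] dvd g ^ q - f * h"
      using prime_dvd_pcompose_monom_minus_power[OF q(1), of g] by (metis dvd_diff_commute dvd_minus_iff minus_diff_eq)
    then have "q dvd n"
      using prime_dvd_if_xpow_minus_one_repeated_factor g f n(1) q(1) \<open>degree f \<ge> 1\<close> by (simp add: M_def)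
    then show False using q(2) by contradiction
  qed
  then show ?thesis using f(3)[OF root] by (auto elim!: dvdE)
qed

lemma ipoly_root_of_unity_pow_coprime:
  fixes w :: "'a::{idom, ring_char_0}"
  assumes "n > 0" "w ^ n = 1" and "ipoly P w = 0"
  shows "coprime t n \<Longrightarrow> ipoly P (w ^ t) = 0"
proof (induction t rule: prime_divisors_induct)
  case zero
  then show ?case using assms by simp
next
  case (unit t)
  then show ?case using assms by simp
next
  case (factor q t)
  then have "\<not> q dvd n" "coprime t n"
    by (metis coprime_mult_left_iff coprime_absorb_left not_prime_unit)+
  moreover have "(w ^ t) ^ n = 1" using assms(2) by (metis mult.commute power_mult power_one)
  ultimately have "ipoly P ((w ^ t) ^ q) = 0"
    using ipoly_root_of_unity_pow_prime[OF assms(1)] factor by blast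
  then show ?case by (metis power_mult mult.commute)
qed

section \<open>Sums of roots of unity\<close>

definition unity_root :: "int \<Rightarrow> int \<Rightarrow> complex" where
  "unity_root n x = cis (2 * pi * of_int x / of_int n)"

lemma unity_root_add: "unity_root n (x + y) = unity_root n x * unity_root n y"
  by (simp add: unity_root_def cis_mult add_divide_distrib distrib_left)

lemma unity_root_power: "unity_root n x ^ k = unity_root n (int k * x)"
  by (simp only: unity_root_def Complex.DeMoivre) (simp add: mult_ac)

lemma unity_root_multiple [simp]: "unity_root n (n * k) = 1"
proof (cases "n = 0")
  case False
  then have "2 * pi * of_int (n * k) / of_int n = 2 * pi * of_int k" by simp
  then show ?thesis by (simp add: unity_root_def)
qed (simp add: unity_root_def)

lemma unity_root_cong:
  assumes "[x = y] (mod n)"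
  shows "unity_root n x = unity_root n y"
proof -
  obtain k where "x = y + n * k" using assms by (metis cong_iff_lin cong_sym)
  then show ?thesis by (simp add: unity_root_add)
qed

lemma unity_root_mod [simp]: "unity_root n (x mod n) = unity_root n x"
  by (rule unity_root_cong) simp

lemma unity_root_eq_1_iff:
  assumes "n \<noteq> 0"
  shows "unity_root n x = 1 \<longleftrightarrow> n dvd x"
proof
  assume "unity_root n x = 1"
  then have "cos (2 * pi * of_int x / of_int n) = 1"
    unfolding unity_root_def by (metis cis.sel(1) one_complex.sel(1))
  then obtain k :: int where "2 * pi * of_int x / of_int n = of_int k * 2 * pi"
    using cos_one_2pi_int by blast
  then have "of_int x = (of_int (n * k) :: real)" using assms by (simp add: field_simps)
  then show "n dvd x" by (simp only: of_int_eq_iff) simp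
qed auto

lemma unity_root_mult_modulus:
  assumes "n \<noteq> 0" "m \<noteq> 0"
  shows "unity_root (n * m) (x * m + y * n) = unity_root n x * unity_root m y"
  using assms by (simp add: unity_root_def cis_mult field_simps)

lemma sum_unity_root:
  assumes "n > 0"
  shows "(\<Sum>u\<in>{0..<n}. unity_root n (u * x)) = (if n dvd x then of_int n else 0)"
proof -
  have "{0..<n} = int ` {..<nat n}"
    using assms by (simp add: image_int_atLeastLessThan lessThan_atLeast0)
  then have "(\<Sum>u\<in>{0..<n}. unity_root n (u * x)) = (\<Sum>i<nat n. unity_root n x ^ i)"
    by (simp add: unity_root_power sum.reindex)
  also have "\<dots> = (if n dvd x then of_int n else 0)"
  proof (cases "n dvd x")
    case False
    then have "unity_root n x \<noteq> 1" using assms by (simp add: unity_root_eq_1_iff)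
    moreover have "unity_root n x ^ nat n = 1" using assms by (simp add: unity_root_power)
    ultimately show ?thesis using False by (simp add: sum_gp_strict)
  qed (use assms in \<open>auto simp: unity_root_eq_1_iff\<close>)
  finally show ?thesis .
qed

text \<open>Galois conjugation \<zeta>_pl \<mapsto> \<zeta>_pl^t, with t \<equiv> u (mod p) and t \<equiv> v (mod l) chosen by the
  Chinese remainder theorem.\<close>
lemma sum_unity_root_pairs_conjugate:
  fixes p l u v :: int and J M J' M' :: "'b \<Rightarrow> int"
  assumes pl: "p > 0" "l > 0" "coprime p l" and "finite S"
    and eq: "(\<Sum>s\<in>S. unity_root p (J s) * unity_root l (M s))
           = (\<Sum>s\<in>S. unity_root p (J' s) * unity_root l (M' s))"
    and uv: "coprime u p" "coprime v l"
  shows "(\<Sum>s\<in>S. unity_root p (u * J s) * unity_root l (v * M s))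
       = (\<Sum>s\<in>S. unity_root p (u * J' s) * unity_root l (v * M' s))"
proof -
  define \<omega> where "\<omega> = unity_root (p * l) 1"
  define E where "E J M s = nat ((J s * l + M s * p) mod (p * l))" for J M :: "'b \<Rightarrow> int" and s
  have \<omega>_power: "\<omega> ^ (t * E J M s) = unity_root p (int t * J s) * unity_root l (int t * M s)" for t J M s
  proof -
    have "\<omega> ^ (t * E J M s) = unity_root (p * l) (int t * ((J s * l + M s * p) mod (p * l)))"
      using pl by (simp add: \<omega>_def E_def unity_root_power)
    also have "\<dots> = unity_root (p * l) (int t * (J s * l + M s * p))"
      by (rule unity_root_cong) (simp add: cong_def mod_mult_right_eq)
    also have "\<dots> = unity_root (p * l) ((int t * J s) * l + (int t * M s) * p)"
      by (simp add: algebra_simps)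
    finally show ?thesis using pl by (simp add: unity_root_mult_modulus)
  qed
  define D where "D = (\<Sum>s\<in>S. monom 1 (E J M s)) - (\<Sum>s\<in>S. monom (1::int) (E J' M' s))"
  have ipoly_D: "ipoly D (\<omega> ^ t) = (\<Sum>s\<in>S. unity_root p (int t * J s) * unity_root l (int t * M s))
      - (\<Sum>s\<in>S. unity_root p (int t * J' s) * unity_root l (int t * M' s))" for t
    by (simp add: D_def ipoly_sum \<omega>_power flip: power_mult)
  obtain t0 where t0: "[t0 = u] (mod p)" "[t0 = v] (mod l)"
    using binary_chinese_remainder_int[OF pl(3)] by blast
  define t where "t = nat (t0 mod (p * l))"
  have t: "[int t = u] (mod p)" "[int t = v] (mod l)"
    using t0 pl by (simp_all add: t_def cong_def mod_mod_cancel)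
  have "coprime (int t) p" "coprime (int t) l"
    using t uv by (meson cong_imp_coprime cong_sym)+
  then have "coprime t (nat (p * l))"
    using pl by (metis coprime_int_iff coprime_mult_right_iff int_nat_eq less_imp_le mult_pos_pos zero_le_mult_iff)
  moreover have "\<omega> ^ nat (p * l) = 1"
    using pl unity_root_multiple[of "p * l" 1] by (simp add: \<omega>_def unity_root_power)
  moreover have "ipoly D \<omega> = 0" using ipoly_D[of 1] eq by simp
  ultimately have "ipoly D (\<omega> ^ t) = 0"
    using pl by (intro ipoly_root_of_unity_pow_coprime[of "nat (p * l)"]) auto
  moreover have "unity_root p (int t * x) = unity_root p (u * x)" "unity_root l (int t * y) = unity_root l (v * y)" for x y
    using t by (simp_all add: unity_root_cong cong_scalar_right)
  ultimately show ?thesis using ipoly_D[of t] by simp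
qed

definition delta_diff :: "int \<Rightarrow> int \<Rightarrow> int \<Rightarrow> int \<Rightarrow> int" where
  "delta_diff n x a b = of_bool ([x = a] (mod n)) - of_bool ([x = b] (mod n))"

lemma sum_unity_root_diff:
  assumes "n > 0"
  shows "(\<Sum>u\<in>{0..<n}. unity_root n (u * (x - a)) - unity_root n (u * (x - b)))
       = of_int (n * delta_diff n x a b)"
  using assms by (simp add: sum_subtractf sum_unity_root delta_diff_def cong_iff_dvd_diff)

text \<open>Fourier inversion on Z/n \<times> Z/m. The differences in both coordinates annihilate the
  characters with u = 0 or v = 0, about which nothing is assumed.\<close>
lemma sum_delta_diff_products_eq:
  fixes n m :: int and J M J' M' :: "'b \<Rightarrow> int"
  assumes nm: "n > 0" "m > 0" and "finite S"
    and eq: "\<And>u v. u \<in> {1..<n} \<Longrightarrow> v \<in> {1..<m} \<Longrightarrow>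
      (\<Sum>s\<in>S. unity_root n (u * J s) * unity_root m (v * M s))
      = (\<Sum>s\<in>S. unity_root n (u * J' s) * unity_root m (v * M' s))"
  shows "(\<Sum>s\<in>S. delta_diff n (J s) j0 j1 * delta_diff m (M s) m0 m1)
       = (\<Sum>s\<in>S. delta_diff n (J' s) j0 j1 * delta_diff m (M' s) m0 m1)"
proof -
  define W where "W u v = (unity_root n (- (u * j0)) - unity_root n (- (u * j1)))
    * (unity_root m (- (v * m0)) - unity_root m (- (v * m1)))" for u v
  define F where "F J M u v = (\<Sum>s\<in>S. unity_root n (u * J s) * unity_root m (v * M s))"
    for J M :: "'b \<Rightarrow> int" and u v
  have shift: "unity_root k (- (w * c)) * unity_root k (w * x) = unity_root k (w * (x - c))" for k w c x
    by (simp flip: unity_root_add add: algebra_simps)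
  have inversion: "(\<Sum>u\<in>{0..<n}. \<Sum>v\<in>{0..<m}. W u v * F J M u v)
      = of_int (n * m * (\<Sum>s\<in>S. delta_diff n (J s) j0 j1 * delta_diff m (M s) m0 m1))"
    for J M :: "'b \<Rightarrow> int"
  proof -
    let ?d = "\<lambda>k x a u. unity_root k (u * (x - a))"
    have "W u v * F J M u v = (\<Sum>s\<in>S. (?d n (J s) j0 u - ?d n (J s) j1 u) * (?d m (M s) m0 v - ?d m (M s) m1 v))"
      for u v
    proof -
      have "W u v * (X * Y) = (unity_root n (- (u * j0)) * X - unity_root n (- (u * j1)) * X)
          * (unity_root m (- (v * m0)) * Y - unity_root m (- (v * m1)) * Y)" for X Y
        by (simp add: W_def algebra_simps)
      then show ?thesis by (simp add: F_def sum_distrib_left shift)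
    qed
    then have "(\<Sum>u\<in>{0..<n}. \<Sum>v\<in>{0..<m}. W u v * F J M u v)
        = (\<Sum>s\<in>S. \<Sum>u\<in>{0..<n}. \<Sum>v\<in>{0..<m}. (?d n (J s) j0 u - ?d n (J s) j1 u) * (?d m (M s) m0 v - ?d m (M s) m1 v))"
      by (subst sum.swap) (simp add: sum.swap[of _ "{0..<m}"])
    also have "\<dots> = (\<Sum>s\<in>S. (\<Sum>u\<in>{0..<n}. ?d n (J s) j0 u - ?d n (J s) j1 u) * (\<Sum>v\<in>{0..<m}. ?d m (M s) m0 v - ?d m (M s) m1 v))"
      by (simp add: sum_product)
    finally show ?thesis
      using nm by (simp add: sum_unity_root_diff sum_distrib_left mult_ac)
  qed
  have "W u v * F J M u v = W u v * F J' M' u v" if "u \<in> {0..<n}" "v \<in> {0..<m}" for u v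
  proof (cases "u = 0 \<or> v = 0")
    case False
    then show ?thesis using eq[of u v] that by (simp add: F_def)
  qed (auto simp: W_def)
  then have "of_int (n * m * (\<Sum>s\<in>S. delta_diff n (J s) j0 j1 * delta_diff m (M s) m0 m1))
      = (of_int (n * m * (\<Sum>s\<in>S. delta_diff n (J' s) j0 j1 * delta_diff m (M' s) m0 m1)) :: complex)"
    by (simp only: flip: inversion) (intro sum.cong refl)
  then show ?thesis using nm by (simp only: of_int_eq_iff) simp
qed

section \<open>Squares modulo p\<close>

lemma finite_sq_set [simp]: "finite (sq_set p)"
  unfolding sq_set_def by (simp add: setcompr_eq_image)

lemma sq_set_subset:
  assumes "prime p"
  shows "sq_set p \<subseteq> {1..<p}"
proof
  fix y assume "y \<in> sq_set p"
  then obtain x where x: "y = x * x mod p" "x \<in> {1..<p}" unfolding sq_set_def by blast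
  have "\<not> p dvd x * x"
    using x(2) assms by (auto simp: prime_dvd_mult_iff zdvd_not_zless)
  moreover have "0 \<le> y" "y < p" using x prime_gt_0_int[OF assms] by simp_all
  ultimately show "y \<in> {1..<p}" using x(1) by (auto simp: dvd_eq_mod_eq_0)
qed

lemma one_in_sq_set: "p > 1 \<Longrightarrow> 1 \<in> sq_set p"
  unfolding sq_set_def by force

lemma exists_non_square:
  assumes "prime p" "odd p"
  obtains n where "n \<in> {1..<p}" "n \<notin> sq_set p"
proof -
  have p: "p > 2" using prime_ge_2_int[OF assms(1)] assms(2) by (cases "p = 2") auto
  define sq where "sq x = x * x mod p" for x
  have "sq (p - 1) = sq 1"
    by (simp add: sq_def mod_eq_dvd_iff algebra_simps)
  moreover have "p - 1 \<in> {1..<p}" "1 \<in> {1..<p}" "p - 1 \<noteq> 1" using p by auto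
  ultimately have "\<not> inj_on sq {1..<p}" unfolding inj_on_def by blast
  then have "card (sq ` {1..<p}) < card {1..<p}"
    using card_image_le[of "{1..<p}" sq] inj_on_iff_eq_card[of "{1..<p}" sq] by simp
  moreover have "sq_set p = sq ` {1..<p}" by (auto simp: sq_set_def sq_def)
  ultimately have "\<not> {1..<p} \<subseteq> sq_set p"
    by (metis card_mono finite_sq_set not_le)
  then show ?thesis using that by blast
qed

section \<open>Isomorphisms of covers\<close>

lemma mod_mult_inverse_cancel:
  fixes a b x p :: int
  assumes "[a * b = 1] (mod p)" "x \<in> {0..<p}"
  shows "a * (b * x mod p) mod p = x"
proof -
  have "a * (b * x mod p) mod p = (a * b) * x mod p" by (simp add: mod_mult_right_eq mult.assoc)
  also have "\<dots> = x mod p" using assms(1) by (metis cong_def cong_scalar_right mult_1)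
  finally show ?thesis using assms(2) by simp
qed

lemma bij_betw_mult_mod:
  fixes a b p :: int
  assumes "[a * b = 1] (mod p)" "p > 0"
  shows "bij_betw (\<lambda>x. b * x mod p) {0..<p} {0..<p}"
proof (rule bij_betw_byWitness[where f' = "\<lambda>y. a * y mod p"])
  have "[b * a = 1] (mod p)" using assms(1) by (simp add: mult.commute)
  then show "\<forall>y\<in>{0..<p}. b * (a * y mod p) mod p = y" by (simp add: mod_mult_inverse_cancel)
qed (use assms in \<open>auto simp: mod_mult_inverse_cancel\<close>)

lemma mult_mod_diff:
  fixes b x y p :: int
  shows "(b * y mod p - b * x mod p) mod p = b * ((y - x) mod p) mod p"
  by (simp add: mod_diff_eq mod_mult_right_eq right_diff_distrib)

lemma cover_iso_mult:
  fixes p l a b :: int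
  assumes "p > 0" and ab: "[a * b = 1] (mod p)"
    and squares: "\<And>d. d \<in> {0..<p} \<Longrightarrow> d \<in> sq_set p \<longleftrightarrow> b * d mod p \<in> sq_set p"
    and voltage: "\<And>d. d \<in> sq_set p \<Longrightarrow> [\<alpha> d = \<beta> (b * d mod p)] (mod l)"
  shows "cover_iso p l \<alpha> \<beta> (map_prod (\<lambda>x. b * x mod p) id)"
proof -
  have "bij_betw (map_prod (\<lambda>x. b * x mod p) id) (cover_verts p l) (cover_verts p l)"
    unfolding cover_verts_def by (intro bij_betw_map_prod bij_betw_mult_mod[OF ab \<open>p > 0\<close>] bij_betw_id)
  moreover have "cover_adj p l \<alpha> (x, i) (y, j) \<longleftrightarrow> cover_adj p l \<beta> (b * x mod p, i) (b * y mod p, j)"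
    for x y i j
  proof -
    define d where "d = (y - x) mod p"
    have "d \<in> {0..<p}" using \<open>p > 0\<close> by (simp add: d_def)
    then show ?thesis using squares[of d] voltage[of d]
      by (auto simp: cover_adj_def mult_mod_diff cong_def simp flip: d_def)
  qed
  ultimately show ?thesis by (auto simp: cover_iso_def graph_iso_def)
qed

lemma graph_iso_scale_voltage:
  fixes l k c :: int
  assumes "l > 0" and kc: "[k * c = 1] (mod l)"
  shows "graph_iso p l (scale_voltage l k \<beta>) \<beta> (map_prod id (\<lambda>i. c * i mod l))"
proof -
  have "bij_betw (map_prod id (\<lambda>i. c * i mod l)) (cover_verts p l) (cover_verts p l)"
    unfolding cover_verts_def by (intro bij_betw_map_prod bij_betw_mult_mod[OF kc \<open>l > 0\<close>] bij_betw_id)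
  moreover have "[e = k * z] (mod l) \<longleftrightarrow> [c * e = z] (mod l)" for e z
  proof
    have "[c * (k * z) = z] (mod l)" using cong_scalar_right[OF kc, of z] by (simp add: mult_ac)
    then show "[e = k * z] (mod l) \<Longrightarrow> [c * e = z] (mod l)" by (metis cong_scalar_left cong_trans)
    have "[k * (c * e) = e] (mod l)" using cong_scalar_right[OF kc, of e] by (simp add: mult_ac)
    then show "[c * e = z] (mod l) \<Longrightarrow> [e = k * z] (mod l)" by (metis cong_scalar_left cong_sym cong_trans)
  qed
  then have "cover_adj p l (scale_voltage l k \<beta>) (x, i) (y, j)
      \<longleftrightarrow> cover_adj p l \<beta> (x, c * i mod l) (y, c * j mod l)" for x y i j
    using mod_mult_right_eq[of c _ l]
    by (simp add: cover_adj_def scale_voltage_def mult_mod_diff flip: cong_def) (simp add: cong_def)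
  ultimately show ?thesis by (auto simp: graph_iso_def)
qed

lemma graph_iso_trans:
  assumes "graph_iso p l \<alpha> \<beta> f" "graph_iso p l \<beta> \<gamma> g"
  shows "graph_iso p l \<alpha> \<gamma> (g \<circ> f)"
  using assms unfolding graph_iso_def by (auto intro: bij_betw_trans dest: bij_betwE)

lemma graph_iso_if_cover_iso_scaled:
  assumes "cover_iso p l \<alpha> (scale_voltage l n \<beta>) f" "coprime n l" "l > 0"
  shows "\<exists>g. graph_iso p l \<alpha> \<beta> g"
proof -
  obtain c where "[n * c = 1] (mod l)" using cong_solve_coprime_int[OF assms(2)] by blast
  then have "graph_iso p l (scale_voltage l n \<beta>) \<beta> (map_prod id (\<lambda>i. c * i mod l))"
    by (rule graph_iso_scale_voltage[OF assms(3)])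
  then show ?thesis using assms(1) graph_iso_trans unfolding cover_iso_def by blast
qed

section \<open>Matching eigenvalues\<close>

lemma coprime_less_prime:
  fixes p u :: int
  assumes "prime p" "u \<in> {1..<p}"
  shows "coprime u p"
  using assms by (metis atLeastLessThan_iff coprime_commute prime_imp_coprime zdvd_not_zless zero_less_one order_less_le_trans)

lemma theta_eq_sum_unity_root:
  "theta p l \<alpha> a k = (\<Sum>s\<in>sq_set p. unity_root p (a * s) * unity_root l (k * \<alpha> s))"
  by (simp add: theta_def flip: unity_root_def)

lemma sum_delta_diff_products_eq_if_theta_eq:
  assumes p: "prime p" and l: "prime l" "l \<noteq> p" and eq: "theta p l \<beta> a k = theta p l \<alpha> 1 1"
  shows "(\<Sum>s\<in>sq_set p. delta_diff p s j0 j1 * delta_diff l (\<alpha> s) m0 m1)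
       = (\<Sum>s\<in>sq_set p. delta_diff p (a * s) j0 j1 * delta_diff l (k * \<beta> s) m0 m1)"
proof (rule sum_delta_diff_products_eq)
  have pl: "p > 0" "l > 0" "coprime p l"
    using p l prime_gt_0_int primes_coprime by auto
  fix u v assume "u \<in> {1..<p}" "v \<in> {1..<l}"
  then have "coprime u p" "coprime v l" using p l coprime_less_prime by auto
  then show "(\<Sum>s\<in>sq_set p. unity_root p (u * s) * unity_root l (v * \<alpha> s))
      = (\<Sum>s\<in>sq_set p. unity_root p (u * (a * s)) * unity_root l (v * (k * \<beta> s)))"
    using sum_unity_root_pairs_conjugate[OF pl finite_sq_set,
        where J = id and M = \<alpha> and J' = "\<lambda>s. a * s" and M' = "\<lambda>s. k * \<beta> s"] eq
    by (simp add: theta_eq_sum_unity_root)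
qed (use p l prime_gt_0_int in auto)

lemma sq_set_cong_iff:
  assumes "prime p" "s \<in> sq_set p" "j \<in> {0..<p}"
  shows "[s = j] (mod p) \<longleftrightarrow> s = j"
proof -
  have "s \<in> {1..<p}" using assms(1,2) sq_set_subset by blast
  then show ?thesis using assms(3) cong_less_imp_eq_int[of s p j] by auto
qed

lemma delta_diff_successor [simp]: "l > 1 \<Longrightarrow> delta_diff l x x (x + 1) = 1"
  by (simp add: delta_diff_def cong_iff_dvd_diff zdvd_not_zless)

lemma multiplier_not_dvd:
  assumes p: "prime p" "odd p" and "l > 1"
    and double_diff: "\<And>j0 j1 m0 m1. (\<Sum>s\<in>sq_set p. delta_diff p s j0 j1 * delta_diff l (\<alpha> s) m0 m1)
      = (\<Sum>s\<in>sq_set p. delta_diff p (a * s) j0 j1 * delta_diff l (k * \<beta> s) m0 m1)"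
  shows "\<not> p dvd a"
proof
  assume "p dvd a"
  obtain n where n: "n \<in> {1..<p}" "n \<notin> sq_set p" using exists_non_square[OF p] .
  have "p > 1" using prime_gt_1_int[OF p(1)] .
  have "delta_diff p s 1 n = of_bool (s = 1)" if "s \<in> sq_set p" for s
    using that n \<open>p > 1\<close> by (auto simp: delta_diff_def sq_set_cong_iff[OF p(1)])
  then have "(\<Sum>s\<in>sq_set p. delta_diff p s 1 n * delta_diff l (\<alpha> s) (\<alpha> 1) (\<alpha> 1 + 1)) = 1"
    using one_in_sq_set[OF \<open>p > 1\<close>] \<open>l > 1\<close> by (simp add: sum.delta cong: sum.cong)
  moreover have "delta_diff p (a * s) 1 n = 0" for s
  proof -
    have "[a * s = 0] (mod p)" using \<open>p dvd a\<close> by (simp add: cong_0_iff)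
    then have "[a * s = x] (mod p) \<longleftrightarrow> p dvd x" for x
      by (metis cong_0_iff cong_sym cong_trans)
    moreover have "\<not> p dvd 1" "\<not> p dvd n" using \<open>p > 1\<close> n(1) by (auto simp: zdvd_not_zless)
    ultimately show ?thesis by (simp add: delta_diff_def)
  qed
  ultimately show False using double_diff[of 1 n "\<alpha> 1" "\<alpha> 1 + 1"] by simp
qed

lemma exists_matching_square:
  assumes p: "prime p" and "l > 1" and "\<not> p dvd a" and j: "j \<in> sq_set p"
    and double_diff: "\<And>j0 j1 m0 m1. (\<Sum>s\<in>sq_set p. delta_diff p s j0 j1 * delta_diff l (\<alpha> s) m0 m1)
      = (\<Sum>s\<in>sq_set p. delta_diff p (a * s) j0 j1 * delta_diff l (k * \<beta> s) m0 m1)"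
  shows "\<exists>s\<in>sq_set p. [a * s = j] (mod p) \<and> [k * \<beta> s = \<alpha> j] (mod l)"
proof (rule ccontr)
  assume none: "\<not> ?thesis"
  have j_range: "j \<in> {1..<p}" using j sq_set_subset[OF p] by blast
  have "delta_diff p s j 0 = of_bool (s = j)" if "s \<in> sq_set p" for s
    using that j_range sq_set_subset[OF p] by (auto simp: delta_diff_def sq_set_cong_iff[OF p])
  then have "(\<Sum>s\<in>sq_set p. delta_diff p s j 0 * delta_diff l (\<alpha> s) (\<alpha> j) (\<alpha> j + 1)) = 1"
    using j \<open>l > 1\<close> by (simp add: sum.delta cong: sum.cong)
  moreover have "(\<Sum>s\<in>sq_set p. delta_diff p (a * s) j 0 * delta_diff l (k * \<beta> s) (\<alpha> j) (\<alpha> j + 1)) \<le> 0"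
  proof (rule sum_nonpos)
    fix s assume s: "s \<in> sq_set p"
    then have "\<not> p dvd a * s"
      using p \<open>\<not> p dvd a\<close> sq_set_subset[OF p] by (auto simp: prime_dvd_mult_iff zdvd_not_zless)
    then have "delta_diff p (a * s) j 0 = of_bool ([a * s = j] (mod p))"
      by (simp add: delta_diff_def cong_0_iff)
    then show "delta_diff p (a * s) j 0 * delta_diff l (k * \<beta> s) (\<alpha> j) (\<alpha> j + 1) \<le> 0"
      using none s by (auto simp: delta_diff_def)
  qed
  ultimately show False using double_diff[of j 0 "\<alpha> j" "\<alpha> j + 1"] by simp
qed

lemma cover_iso_of_matching_squares:
  assumes p: "prime p" and "l > 0" and ab: "[a * b = 1] (mod p)"
    and match: "\<And>j. j \<in> sq_set p \<Longrightarrow> \<exists>s\<in>sq_set p. [a * s = j] (mod p) \<and> [k * \<beta> s = \<alpha> j] (mod l)"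
  shows "cover_iso p l \<alpha> (scale_voltage l k \<beta>) (map_prod (\<lambda>x. b * x mod p) id)"
proof (rule cover_iso_mult[OF _ ab])
  show "p > 0" using p prime_gt_0_int by blast
  define \<phi> where "\<phi> = (\<lambda>x. b * x mod p)"
  have S_range: "sq_set p \<subseteq> {0..<p}" using sq_set_subset[OF p] by auto
  have inj: "inj_on \<phi> {0..<p}"
    using bij_betw_mult_mod[OF ab \<open>p > 0\<close>] by (simp add: \<phi>_def bij_betw_def)
  have \<phi>_match: "\<phi> j \<in> sq_set p \<and> [k * \<beta> (\<phi> j) = \<alpha> j] (mod l)" if j: "j \<in> sq_set p" for j
  proof -
    obtain s where s: "s \<in> sq_set p" "[a * s = j] (mod p)" "[k * \<beta> s = \<alpha> j] (mod l)"
      using match[OF j] by blast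
    have "[b * (a * s) = b * j] (mod p)" using s(2) by (rule cong_scalar_left)
    moreover have "[b * (a * s) = s] (mod p)"
      using cong_scalar_right[OF ab, of s] by (simp add: mult_ac)
    ultimately have "[s = b * j] (mod p)" by (metis cong_sym cong_trans)
    moreover have "s \<in> {0..<p}" using s(1) S_range by blast
    ultimately have "s = \<phi> j" by (simp add: \<phi>_def cong_def)
    then show ?thesis using s by simp
  qed
  then have image: "\<phi> ` sq_set p = sq_set p"
    using inj_on_subset[OF inj S_range] by (intro endo_inj_surj) auto
  have preimage: "d \<in> sq_set p" if d: "d \<in> {0..<p}" "\<phi> d \<in> sq_set p" for d
  proof -
    obtain j where "j \<in> sq_set p" "\<phi> d = \<phi> j" using d(2) by (metis image imageE)
    then show ?thesis using inj_onD[OF inj] d(1) S_range by blast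
  qed
  show "d \<in> sq_set p \<longleftrightarrow> b * d mod p \<in> sq_set p" if "d \<in> {0..<p}" for d
    using \<phi>_match[of d] preimage[OF that] unfolding \<phi>_def by blast
  show "[\<alpha> d = scale_voltage l k \<beta> (b * d mod p)] (mod l)" if "d \<in> sq_set p" for d
    using \<phi>_match[OF that] by (simp add: \<phi>_def scale_voltage_def cong_def)
qed

theorem theorem1p1:
  fixes p l :: int and \<alpha> \<beta> :: "int \<Rightarrow> int"
  assumes "prime p" and "p mod 4 = 1" and "prime l" and "l \<noteq> p"
    and "is_voltage p l \<alpha>" and "is_voltage p l \<beta>"
    and "spectrum_mset p l \<alpha> = spectrum_mset p l \<beta>"
  shows "(\<exists>n\<in>{1..<l}. \<exists>f. cover_iso p l \<alpha> (scale_voltage l n \<beta>) f)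
         \<and> (\<exists>g. graph_iso p l \<alpha> \<beta> g)"
proof -
  have p: "p > 1" "odd p" and l: "l > 1"
    using assms(1-3) prime_gt_1_int by (auto, presburger)
  have "theta p l \<alpha> 1 1 \<in># spectrum_mset p l \<alpha>"
    using p l by (auto simp: spectrum_mset_def intro!: image_eqI[where x = "(1, 1)"])
  then have "theta p l \<alpha> 1 1 \<in># spectrum_mset p l \<beta>" using assms(7) by simp
  then obtain a k where k: "k \<in> {0..<l}" and eigenvalue: "theta p l \<beta> a k = theta p l \<alpha> 1 1"
    by (auto simp: spectrum_mset_def)
  note double_diff = sum_delta_diff_products_eq_if_theta_eq[OF assms(1,3,4) eigenvalue]
  have "\<not> p dvd a" using multiplier_not_dvd[OF assms(1) p(2) l double_diff] .
  then obtain b where ab: "[a * b = 1] (mod p)"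
    using cong_solve_coprime_int prime_imp_coprime[OF assms(1)] by (metis coprime_commute)
  have match: "\<exists>s\<in>sq_set p. [a * s = j] (mod p) \<and> [k * \<beta> s = \<alpha> j] (mod l)" if "j \<in> sq_set p" for j
    using exists_matching_square[OF assms(1) l \<open>\<not> p dvd a\<close> that double_diff] .
  have cover: "cover_iso p l \<alpha> (scale_voltage l k \<beta>) (map_prod (\<lambda>x. b * x mod p) id)"
    using cover_iso_of_matching_squares[OF assms(1) _ ab match] l by simp
  obtain j where "j \<in> sq_set p" "\<not> [\<alpha> j = 0] (mod l)"
    using assms(5) by (auto simp: is_voltage_def cong_def)
  then have "\<not> l dvd k" using match by (metis cong_0_iff cong_sym cong_trans dvd_mult2)
  then have "k \<in> {1..<l}" "coprime k l"
    using k prime_imp_coprime[OF assms(3)] by (auto simp: coprime_commute order_le_less)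
  then show ?thesis using cover graph_iso_if_cover_iso_scaled l by auto
qed

end
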